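(* Let $n$ be odd, $t\in\{n,2n\}$ and $\lambda$ a positive divisor of $t$. Then there exists a cellular biembedding of a pair of cyclic $3$-cycle decompositions of ${}^\lambda K_{(\frac{6n}{t}+1)\times\frac{t}{\lambda}}$ into an orientable surface.
   Context: $K_{q\times r}$ is the complete multipartite graph with $q$ parts each of size $r$, and ${}^\lambda\Gamma$ denotes the multigraph obtained from $\Gamma$ by repeating each edge $\lambda$ times; the vertex set is identified with $\mathbb{Z}_{qr}$ with parts the cosets of the subgroup of order $r$. A cyclic $3$-cycle decomposition is a set of $3$-cycles whose edge multisets partition the edge multiset and which is invariant under translation by $\mathbb{Z}_{qr}$. An embedding of a multigraph (topologized via a simple subdivision) into a surface is cellular if every face is homeomorphic to an open disc; a biembedding of two cycle decompositions $\mathcal D,\mathcal D'$ is a face $2$-colorable embedding in which one colour class consists of the cycles of $\mathcal D$ and the other of those of $\mathcal D'$. *)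

theory Defs
  imports Main "HOL-Library.Multiset"
begin

text \<open>The multigraph lambda K_{q x r} on vertex set Z_{qr} = {0..<q*r}; the parts are the
cosets of the subgroup of order r, i.e. the residue classes mod q.  Darts (arcs) are triples
(x, y, i): an edge between x and y (in different parts) with parallel-edge label i < lambda,
traversed from x to y.  The edge {x,y}_i consists of the two darts (x,y,i) and (y,x,i).\<close>

definition mp_vertices :: "nat \<Rightarrow> nat \<Rightarrow> nat set" where
  "mp_vertices q r = {..<q*r}"

definition same_part :: "nat \<Rightarrow> nat \<Rightarrow> nat \<Rightarrow> bool" where
  "same_part q x y \<longleftrightarrow> x mod q = y mod q"

definition mp_darts :: "nat \<Rightarrow> nat \<Rightarrow> nat \<Rightarrow> (nat \<times> nat \<times> nat) set" where
  "mp_darts q r lam = {(x, y, i). x < q*r \<and> y < q*r \<and> \<not> same_part q x y \<and> i < lam}"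

definition rev_dart :: "nat \<times> nat \<times> nat \<Rightarrow> nat \<times> nat \<times> nat" where
  "rev_dart d = (case d of (x, y, i) \<Rightarrow> (y, x, i))"

definition tail :: "nat \<times> nat \<times> nat \<Rightarrow> nat" where
  "tail d = fst d"

text \<open>3-cycle decompositions: a 3-cycle in a (multi)graph is determined (up to the choice of
parallel edges) by its 3-element vertex set; a decomposition is a multiset of 3-cycles
covering every pair of vertices from different parts exactly lambda times.\<close>

definition is_3cycle_decomp :: "nat \<Rightarrow> nat \<Rightarrow> nat \<Rightarrow> nat set multiset \<Rightarrow> bool" where
  "is_3cycle_decomp q r lam D \<longleftrightarrow>
     (\<forall>S \<in># D. card S = 3 \<and> S \<subseteq> mp_vertices q r \<and>
                (\<forall>x\<in>S. \<forall>y\<in>S. x \<noteq> y \<longrightarrow> \<not> same_part q x y)) \<and>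
     (\<forall>x \<in> mp_vertices q r. \<forall>y \<in> mp_vertices q r. \<not> same_part q x y \<longrightarrow>
         size (filter_mset (\<lambda>S. x \<in> S \<and> y \<in> S) D) = lam)"

definition translate_cycle :: "nat \<Rightarrow> nat \<Rightarrow> nat set \<Rightarrow> nat set" where
  "translate_cycle v g S = (\<lambda>x. (x + g) mod v) ` S"

definition is_cyclic_3cycle_decomp :: "nat \<Rightarrow> nat \<Rightarrow> nat \<Rightarrow> nat set multiset \<Rightarrow> bool" where
  "is_cyclic_3cycle_decomp q r lam D \<longleftrightarrow>
     is_3cycle_decomp q r lam D \<and>
     (\<forall>g < q*r. image_mset (translate_cycle (q*r) g) D = D)"

text \<open>Orientable cellular embeddings of a connected multigraph, combinatorially: a rotation
system, i.e. a permutation rho of the darts that cyclically permutes the darts at each vertex.\<close>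

definition rotation_system :: "(nat \<times> nat \<times> nat) set \<Rightarrow> (nat \<times> nat \<times> nat \<Rightarrow> nat \<times> nat \<times> nat) \<Rightarrow> bool" where
  "rotation_system Dt \<rho> \<longleftrightarrow>
     bij_betw \<rho> Dt Dt \<and>
     (\<forall>d\<in>Dt. tail (\<rho> d) = tail d) \<and>
     (\<forall>d\<in>Dt. \<forall>d'\<in>Dt. tail d = tail d' \<longrightarrow> (\<exists>k. (\<rho> ^^ k) d = d'))"

definition face_perm :: "(nat \<times> nat \<times> nat \<Rightarrow> nat \<times> nat \<times> nat) \<Rightarrow> nat \<times> nat \<times> nat \<Rightarrow> nat \<times> nat \<times> nat" where
  "face_perm \<rho> = \<rho> \<circ> rev_dart"

definition face_of :: "(nat \<times> nat \<times> nat \<Rightarrow> nat \<times> nat \<times> nat) \<Rightarrow> nat \<times> nat \<times> nat \<Rightarrow> (nat \<times> nat \<times> nat) set" where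
  "face_of \<rho> d = {(face_perm \<rho> ^^ k) d | k. True}"

definition faces :: "(nat \<times> nat \<times> nat) set \<Rightarrow> (nat \<times> nat \<times> nat \<Rightarrow> nat \<times> nat \<times> nat) \<Rightarrow> (nat \<times> nat \<times> nat) set set" where
  "faces Dt \<rho> = face_of \<rho> ` Dt"

definition face_vertices :: "(nat \<times> nat \<times> nat) set \<Rightarrow> nat set" where
  "face_vertices f = tail ` f"

definition orientable_biembedding ::
  "nat \<Rightarrow> nat \<Rightarrow> nat \<Rightarrow> nat set multiset \<Rightarrow> nat set multiset \<Rightarrow>
   (nat \<times> nat \<times> nat \<Rightarrow> nat \<times> nat \<times> nat) \<Rightarrow> ((nat \<times> nat \<times> nat) set \<Rightarrow> bool) \<Rightarrow> bool" where
  "orientable_biembedding q r lam D D' \<rho> col \<longleftrightarrow>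
     (let Dt = mp_darts q r lam in
       rotation_system Dt \<rho> \<and>
       (\<forall>f \<in> faces Dt \<rho>. card f = 3) \<and>
       (\<forall>d \<in> Dt. col (face_of \<rho> d) \<noteq> col (face_of \<rho> (rev_dart d))) \<and>
       image_mset face_vertices (mset_set {f \<in> faces Dt \<rho>. col f}) = D \<and>
       image_mset face_vertices (mset_set {f \<in> faces Dt \<rho>. \<not> col f}) = D')"

end

theory Submission
  imports Defs "HOL-Number_Theory.Cong"
begin

text \<open>Archdeacon's construction from a Heffter array. Let \<open>N = q r \<lambda> = M n\<close>, where
  \<open>(M, q) = (7, 7)\<close> for \<open>t = n\<close> and \<open>(8, 4)\<close> for \<open>t = 2 n\<close>. The darts leaving any vertex of
  \<open>\<lambda>K\<^sub>q\<^sub>\<times>\<^sub>r\<close> can be labelled bijectively by the \<open>6 n\<close> elements of \<open>Z\<^sub>N\<close> outside the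
  subgroup of order \<open>N / q\<close>, so that the head of a dart is its tail plus its label modulo
  \<open>q r\<close> and reversal negates labels. These elements are exactly the entries \<open>\<plusminus>a(i, s)\<close> of
  the \<open>3 \<times> n\<close> array with columns \<open>(1 + M i, 2 - 2 M i, M i - 3)\<close>, whose columns and broken
  diagonals sum to zero. Taking the same cyclic order of the labels as rotation at every
  vertex gives an orientable embedding whose faces run through the columns (positive entries)
  and the diagonals (negative entries): all faces are triangles, properly 2-coloured by sign,
  and translation by \<open>Z\<^sub>q\<^sub>r\<close> permutes the faces of each colour. For odd \<open>n\<close> the chosen
  order is a single cycle, so it really is a rotation at each vertex.\<close>

definition head :: "nat \<times> nat \<times> nat \<Rightarrow> nat" where
  "head d = fst (snd d)"

lemma tail_rev_dart [simp]: "tail (rev_dart d) = head d"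
  and head_rev_dart [simp]: "head (rev_dart d) = tail d"
  by (cases d; simp add: rev_dart_def tail_def head_def)+

lemma dart_eq_triple: "d = (tail d, head d, snd (snd d))"
  by (cases d) (simp add: tail_def head_def)

lemma finite_mp_darts: "finite (mp_darts q r lam)"
proof (rule finite_subset)
  show "mp_darts q r lam \<subseteq> {..<q*r} \<times> {..<q*r} \<times> {..<lam}"
    by (auto simp: mp_darts_def)
qed auto

lemma mp_dartsD:
  assumes "d \<in> mp_darts q r lam"
  shows "tail d < q * r" "head d < q * r" "\<not> same_part q (tail d) (head d)"
    "snd (snd d) < lam" "tail d \<noteq> head d"
  using assms by (auto simp: mp_darts_def tail_def head_def same_part_def)

lemma rev_dart_in_mp_darts: "d \<in> mp_darts q r lam \<Longrightarrow> rev_dart d \<in> mp_darts q r lam"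
  by (auto simp: mp_darts_def rev_dart_def same_part_def)

lemma funpow_in: "a \<in> A \<Longrightarrow> f ` A \<subseteq> A \<Longrightarrow> (f ^^ k) a \<in> A"
  by (induction k) auto

lemma funpow_reach_from_any:
  assumes "finite A" "f ` A \<subseteq> A" "inj_on f A" "a \<in> A"
    and reach: "\<And>b. b \<in> A \<Longrightarrow> \<exists>k. (f ^^ k) a = b"
    and "b \<in> A" "c \<in> A"
  shows "\<exists>k. (f ^^ k) b = c"
proof -
  define p where "p x = (if x \<in> A then f x else x)" for x
  have "inj p"
    using assms(2,3) by (auto simp: inj_def p_def inj_on_def)
  have p_pow: "(p ^^ k) x = (f ^^ k) x" if "x \<in> A" for x k
    using that assms(2) by (induction k) (auto simp: p_def funpow_in)
  have "{y. \<exists>k. y = (p ^^ k) a} \<subseteq> A"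
    using p_pow funpow_in assms(2,4) by auto
  then obtain m where "m > 0" "(p ^^ m) a = a"
    using funpow_inj_finite[OF \<open>inj p\<close>] finite_subset[OF _ \<open>finite A\<close>] by metis
  then have period: "(f ^^ (m * j)) a = a" for j
    using p_pow[OF assms(4)] by (induction j) (auto simp: funpow_add)
  obtain i where i: "(f ^^ i) a = b" using reach assms(6) by blast
  obtain j where j: "(f ^^ j) a = c" using reach assms(7) by blast
  have "(f ^^ (m * i - i)) b = (f ^^ (m * i - i + i)) a"
    using i by (simp add: funpow_add)
  also have "m * i - i + i = m * i"
    using \<open>m > 0\<close> by (simp add: mult_le_mono1)
  finally have "(f ^^ (j + (m * i - i))) b = c"
    using period j by (simp add: funpow_add)
  then show ?thesis ..
qed

section \<open>Rotation systems given by a labelling of the darts\<close>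

text \<open>The rotation at every vertex is one and the same cyclic order \<open>\<sigma>\<close> of the labels \<open>L\<close>;
  \<open>val\<close> gives the difference head minus tail of a dart from its label, and
  \<open>\<tau> = \<sigma> \<circ> neg\<close> is the induced face permutation of the labels.\<close>

locale label_rotation =
  fixes q r lam :: nat
    and L :: "'l set" and val :: "'l \<Rightarrow> nat" and neg :: "'l \<Rightarrow> 'l" and \<sigma> :: "'l \<Rightarrow> 'l"
    and black :: "'l \<Rightarrow> bool" and lbl :: "nat \<times> nat \<times> nat \<Rightarrow> 'l"
  assumes order_pos: "0 < q * r"
    and lbl_bij: "\<And>x. x < q * r \<Longrightarrow> bij_betw lbl {d \<in> mp_darts q r lam. tail d = x} L"
    and head_lbl: "\<And>d. d \<in> mp_darts q r lam \<Longrightarrow> head d = (tail d + val (lbl d)) mod (q * r)"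
    and lbl_rev_dart: "\<And>d. d \<in> mp_darts q r lam \<Longrightarrow> lbl (rev_dart d) = neg (lbl d)"
    and \<sigma>_in: "\<And>l. l \<in> L \<Longrightarrow> \<sigma> l \<in> L"
    and inj_\<sigma>: "inj_on \<sigma> L"
    and \<sigma>_cyclic: "\<And>l l'. l \<in> L \<Longrightarrow> l' \<in> L \<Longrightarrow> \<exists>k. (\<sigma> ^^ k) l = l'"
    and \<tau>_cube: "\<And>l. l \<in> L \<Longrightarrow> \<sigma> (neg (\<sigma> (neg (\<sigma> (neg l))))) = l"
    and \<tau>_val_sum: "\<And>l. l \<in> L \<Longrightarrow>
       (val l + val (\<sigma> (neg l)) + val (\<sigma> (neg (\<sigma> (neg l))))) mod (q * r) = 0"
    and black_\<tau>: "\<And>l. l \<in> L \<Longrightarrow> black (\<sigma> (neg l)) = black l"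
    and black_neg: "\<And>l. l \<in> L \<Longrightarrow> black (neg l) = (\<not> black l)"
begin

abbreviation "v \<equiv> q * r"
abbreviation "darts \<equiv> mp_darts q r lam"
abbreviation "\<tau> l \<equiv> \<sigma> (neg l)"

definition dart_at :: "nat \<Rightarrow> 'l \<Rightarrow> nat \<times> nat \<times> nat" where
  "dart_at x l = inv_into {d \<in> darts. tail d = x} lbl l"

definition rot :: "nat \<times> nat \<times> nat \<Rightarrow> nat \<times> nat \<times> nat" where
  "rot d = dart_at (tail d) (\<sigma> (lbl d))"

definition face_colour :: "(nat \<times> nat \<times> nat) set \<Rightarrow> bool" where
  "face_colour f \<longleftrightarrow> (\<exists>d\<in>f. black (lbl d))"

lemma lbl_in: "d \<in> darts \<Longrightarrow> lbl d \<in> L"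
  using bij_betwE[OF lbl_bij[OF mp_dartsD(1)]] by blast

lemma dart_eqI:
  assumes "d \<in> darts" "d' \<in> darts" "tail d = tail d'" "lbl d = lbl d'"
  shows "d = d'"
  using bij_betw_imp_inj_on[OF lbl_bij[OF mp_dartsD(1)[OF assms(1)]]] assms
  by (auto dest: inj_onD)

lemma dart_at:
  assumes "x < v" "l \<in> L"
  shows "dart_at x l \<in> darts" "tail (dart_at x l) = x" "lbl (dart_at x l) = l"
proof -
  have l: "l \<in> lbl ` {d \<in> darts. tail d = x}"
    using bij_betw_imp_surj_on[OF lbl_bij[OF assms(1)]] assms(2) by simp
  show "dart_at x l \<in> darts" "tail (dart_at x l) = x"
    using inv_into_into[OF l] by (simp_all add: dart_at_def)
  show "lbl (dart_at x l) = l"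
    using f_inv_into_f[OF l] by (simp add: dart_at_def)
qed

lemma rot:
  assumes "d \<in> darts"
  shows "rot d \<in> darts" "tail (rot d) = tail d" "lbl (rot d) = \<sigma> (lbl d)"
  using dart_at[OF mp_dartsD(1)[OF assms] \<sigma>_in[OF lbl_in[OF assms]]] by (simp_all add: rot_def)

lemma rot_funpow:
  assumes "d \<in> darts"
  shows "(rot ^^ k) d \<in> darts \<and> tail ((rot ^^ k) d) = tail d \<and> lbl ((rot ^^ k) d) = (\<sigma> ^^ k) (lbl d)"
  by (induction k) (use assms rot in auto)

lemma rotation_system_rot: "rotation_system darts rot"
  unfolding rotation_system_def
proof (intro conjI ballI impI)
  have "inj_on rot darts"
  proof (rule inj_onI)
    fix a b assume "a \<in> darts" "b \<in> darts" "rot a = rot b"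
    then show "a = b"
      using rot inj_onD[OF inj_\<sigma>] lbl_in dart_eqI by metis
  qed
  moreover have "rot ` darts = darts"
    using endo_inj_surj[OF finite_mp_darts _ \<open>inj_on rot darts\<close>] rot(1) by blast
  ultimately show "bij_betw rot darts darts"
    by (simp add: bij_betw_def)
next
  fix d assume "d \<in> darts"
  then show "tail (rot d) = tail d" by (rule rot(2))
next
  fix d d' assume d: "d \<in> darts" "d' \<in> darts" "tail d = tail d'"
  obtain k where "(\<sigma> ^^ k) (lbl d) = lbl d'"
    using \<sigma>_cyclic lbl_in d by blast
  then have "(rot ^^ k) d = d'"
    using rot_funpow[OF d(1), of k] d dart_eqI by metis
  then show "\<exists>k. (rot ^^ k) d = d'" ..
qed

abbreviation "\<phi> \<equiv> face_perm rot"

lemma face_perm_rot: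
  assumes "d \<in> darts"
  shows "\<phi> d \<in> darts" "tail (\<phi> d) = head d" "lbl (\<phi> d) = \<tau> (lbl d)"
  using rot[OF rev_dart_in_mp_darts[OF assms]] lbl_rev_dart[OF assms]
  by (simp_all add: face_perm_def)

lemma face_perm_rot_cube:
  assumes d: "d \<in> darts"
  shows "\<phi> (\<phi> (\<phi> d)) = d"
proof (rule dart_eqI)
  let ?l = "lbl d"
  have d1: "\<phi> d \<in> darts" and d2: "\<phi> (\<phi> d) \<in> darts"
    using face_perm_rot(1) d by blast+
  show "\<phi> (\<phi> (\<phi> d)) \<in> darts" using face_perm_rot(1)[OF d2] .
  have tail_\<phi>: "tail (\<phi> e) = (tail e + val (lbl e)) mod v" if "e \<in> darts" for e
    using face_perm_rot(2)[OF that] head_lbl[OF that] by simp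
  have "tail (\<phi> (\<phi> (\<phi> d))) = (tail d + (val ?l + val (\<tau> ?l) + val (\<tau> (\<tau> ?l)))) mod v"
    using tail_\<phi>[OF d] tail_\<phi>[OF d1] tail_\<phi>[OF d2] face_perm_rot(3) d d1
    by (simp add: mod_add_left_eq add.assoc)
  also have "\<dots> = tail d"
    using \<tau>_val_sum[OF lbl_in[OF d]] mp_dartsD(1)[OF d] by (metis mod_add_right_eq add_0_right mod_less)
  finally show "tail (\<phi> (\<phi> (\<phi> d))) = tail d" .
  show "lbl (\<phi> (\<phi> (\<phi> d))) = lbl d"
    using face_perm_rot(3) d d1 d2 \<tau>_cube lbl_in by simp
qed (rule d)

lemma face_triangle:
  assumes "d \<in> darts"
  shows "\<phi> d \<in> darts" "\<phi> (\<phi> d) \<in> darts"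
    "tail (\<phi> d) = head d" "tail (\<phi> (\<phi> d)) = head (\<phi> d)" "tail d = head (\<phi> (\<phi> d))"
  using face_perm_rot[OF assms] face_perm_rot[OF face_perm_rot(1)[OF assms]]
    face_perm_rot(2)[OF face_perm_rot(1)[OF face_perm_rot(1)[OF assms]]] face_perm_rot_cube[OF assms]
  by simp_all

lemma face_of_rot:
  assumes "d \<in> darts"
  shows "face_of rot d = {d, \<phi> d, \<phi> (\<phi> d)}"
proof -
  have "(\<phi> ^^ k) d \<in> {d, \<phi> d, \<phi> (\<phi> d)}" for k
    by (induction k) (use face_perm_rot_cube[OF assms] in auto)
  moreover have "d = (\<phi> ^^ 0) d" "\<phi> d = (\<phi> ^^ 1) d" "\<phi> (\<phi> d) = (\<phi> ^^ 2) d"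
    by (simp_all add: numeral_2_eq_2)
  ultimately show ?thesis
    unfolding face_of_def by blast
qed

lemma face_of_rot_subset: "d \<in> darts \<Longrightarrow> face_of rot d \<subseteq> darts"
  using face_of_rot face_triangle by auto

lemma in_face_of_rot: "d \<in> darts \<Longrightarrow> d \<in> face_of rot d"
  using face_of_rot by auto

lemma face_tails_distinct:
  assumes "d \<in> darts"
  shows "tail d \<noteq> tail (\<phi> d)" "tail (\<phi> d) \<noteq> tail (\<phi> (\<phi> d))" "tail (\<phi> (\<phi> d)) \<noteq> tail d"
  using face_triangle[OF assms] mp_dartsD(5) assms by metis+

lemma face_of_rot_eq:
  assumes d: "d \<in> darts" and "d' \<in> face_of rot d"
  shows "face_of rot d' = face_of rot d"
proof -
  have "d' = d \<or> d' = \<phi> d \<or> d' = \<phi> (\<phi> d)"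
    using assms(2) by (simp add: face_of_rot[OF d])
  then show ?thesis
    using d face_triangle(1,2)[OF d] face_perm_rot_cube[OF d]
    by (elim disjE) (simp_all add: face_of_rot insert_commute)
qed

lemma face_vertices_face_of_rot:
  assumes "d \<in> darts"
  shows "face_vertices (face_of rot d) = {tail d, tail (\<phi> d), tail (\<phi> (\<phi> d))}"
  by (simp add: face_of_rot[OF assms] face_vertices_def)

lemma card_face_of_rot:
  assumes "d \<in> darts"
  shows "card (face_of rot d) = 3"
  using face_tails_distinct[OF assms] by (auto simp: face_of_rot[OF assms] card_insert_if)

lemma card_face_vertices_face_of_rot:
  assumes "d \<in> darts"
  shows "card (face_vertices (face_of rot d)) = 3"
  using face_tails_distinct[OF assms] by (auto simp: face_vertices_face_of_rot[OF assms] card_insert_if)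

lemma face_colour_face_of_rot:
  assumes "d \<in> darts"
  shows "face_colour (face_of rot d) = black (lbl d)"
  using face_perm_rot[OF assms] face_perm_rot[OF face_triangle(1)[OF assms]]
    black_\<tau>[OF lbl_in[OF assms]] black_\<tau>[OF lbl_in[OF face_triangle(1)[OF assms]]]
  by (auto simp: face_colour_def face_of_rot[OF assms])

lemma face_colour_rev_dart:
  assumes "d \<in> darts"
  shows "face_colour (face_of rot (rev_dart d)) = (\<not> face_colour (face_of rot d))"
  using face_colour_face_of_rot[OF assms] face_colour_face_of_rot[OF rev_dart_in_mp_darts[OF assms]]
    lbl_rev_dart[OF assms] black_neg[OF lbl_in[OF assms]]
  by simp

lemma face_has_edge:
  assumes d: "d \<in> darts" and "x \<in> face_vertices (face_of rot d)" "y \<in> face_vertices (face_of rot d)"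
    and "x \<noteq> y"
  shows "\<exists>a\<in>face_of rot d. {tail a, head a} = {x, y}"
proof -
  have "d \<in> face_of rot d" "\<phi> d \<in> face_of rot d" "\<phi> (\<phi> d) \<in> face_of rot d"
    by (simp_all add: face_of_rot[OF d])
  then show ?thesis
    using assms face_triangle[OF d] unfolding face_vertices_face_of_rot[OF d]
    by (auto simp: doubleton_eq_iff)
qed

lemma face_edge_unique:
  assumes d: "d \<in> darts" and "a \<in> face_of rot d" "b \<in> face_of rot d"
    and "{tail a, head a} = {tail b, head b}"
  shows "a = b"
  using assms face_triangle[OF d] face_tails_distinct[OF d]
  by (auto simp: face_of_rot[OF d] doubleton_eq_iff)

definition colour_class :: "bool \<Rightarrow> (nat \<times> nat \<times> nat) set set" where
  "colour_class c = {f \<in> faces darts rot. face_colour f = c}"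

definition colour_decomp :: "bool \<Rightarrow> nat set multiset" where
  "colour_decomp c = image_mset face_vertices (mset_set (colour_class c))"

lemma finite_colour_class: "finite (colour_class c)"
  using finite_mp_darts by (simp add: colour_class_def faces_def)

lemma colour_classE:
  assumes "f \<in> colour_class c"
  obtains d where "d \<in> darts" "f = face_of rot d" "face_colour f = c"
  using assms by (auto simp: colour_class_def faces_def)

lemma colour_class_subset: "f \<in> colour_class c \<Longrightarrow> f \<subseteq> darts"
  using face_of_rot_subset by (metis colour_classE)

lemma face_of_rot_in_colour_class:
  "d \<in> darts \<Longrightarrow> face_colour (face_of rot d) = c \<Longrightarrow> face_of rot d \<in> colour_class c"
  by (simp add: colour_class_def faces_def)

lemma dart_ends_in_face_vertices:
  assumes "d \<in> darts"
  shows "tail d \<in> face_vertices (face_of rot d)" "head d \<in> face_vertices (face_of rot d)"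
  using face_triangle(3)[OF assms] by (simp_all add: face_vertices_face_of_rot[OF assms])

lemma card_colour_class_containing:
  assumes x: "x < v" and y: "y < v" and xy: "\<not> same_part q x y"
  shows "card {f \<in> colour_class c. x \<in> face_vertices f \<and> y \<in> face_vertices f} = lam"
proof -
  let ?S = "{f \<in> colour_class c. x \<in> face_vertices f \<and> y \<in> face_vertices f}"
  \<comment> \<open>The two darts of the \<open>i\<close>-th edge between \<open>x\<close> and \<open>y\<close> lie on faces of opposite colours;
    the faces in \<open>?S\<close> correspond to the darts \<open>e i\<close> on the side of colour \<open>c\<close>.\<close>
  define e where
    "e i = (if face_colour (face_of rot (x, y, i)) = c then (x, y, i) else (y, x, i))" for i
  have e: "e i \<in> darts" "{tail (e i), head (e i)} = {x, y}" "snd (snd (e i)) = i"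
    "face_colour (face_of rot (e i)) = c" if "i < lam" for i
  proof -
    have xy_dart: "(x, y, i) \<in> darts" and rev: "rev_dart (x, y, i) = (y, x, i)"
      using that x y xy by (auto simp: mp_darts_def rev_dart_def)
    then show "e i \<in> darts" "face_colour (face_of rot (e i)) = c"
      using rev_dart_in_mp_darts[OF xy_dart] face_colour_rev_dart[OF xy_dart] by (auto simp: e_def)
    show "{tail (e i), head (e i)} = {x, y}" "snd (snd (e i)) = i"
      by (auto simp: e_def tail_def head_def)
  qed
  have "face_of rot (e i) \<in> ?S" if "i < lam" for i
    using e[OF that] dart_ends_in_face_vertices[OF e(1)[OF that]]
    by (auto simp: doubleton_eq_iff intro: face_of_rot_in_colour_class)
  moreover have "inj_on (\<lambda>i. face_of rot (e i)) {..<lam}"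
  proof (rule inj_onI)
    fix i j assume "i \<in> {..<lam}" "j \<in> {..<lam}" "face_of rot (e i) = face_of rot (e j)"
    then have "e i = e j"
      using face_edge_unique e in_face_of_rot by (metis lessThan_iff)
    then show "i = j"
      using e(3) \<open>i \<in> {..<lam}\<close> \<open>j \<in> {..<lam}\<close> by (metis lessThan_iff)
  qed
  moreover have "f \<in> (\<lambda>i. face_of rot (e i)) ` {..<lam}" if f: "f \<in> ?S" for f
  proof -
    obtain d where d: "d \<in> darts" "f = face_of rot d" "face_colour f = c"
      using f by (auto elim: colour_classE)
    have "x \<noteq> y" using xy by (auto simp: same_part_def)
    then obtain a where a: "a \<in> f" "{tail a, head a} = {x, y}"
      using face_has_edge f d by blast
    have a_dart: "a \<in> darts" and fa: "face_of rot a = f"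
      using a(1) d face_of_rot_subset face_of_rot_eq by blast+
    define i where "i = snd (snd a)"
    have i: "i < lam" using mp_dartsD(4)[OF a_dart] by (simp add: i_def)
    have ends: "a = (x, y, i) \<or> a = (y, x, i)"
      using a(2) dart_eq_triple[of a] unfolding i_def by (metis doubleton_eq_iff)
    have "e i = a"
    proof (cases "a = (x, y, i)")
      case True
      then show ?thesis using fa d(3) by (simp add: e_def)
    next
      case False
      then have a_yx: "a = (y, x, i)" using ends by blast
      then have "face_colour (face_of rot (x, y, i)) = (\<not> c)"
        using face_colour_rev_dart[OF a_dart] fa d(3) by (simp add: rev_dart_def)
      then show ?thesis using a_yx by (simp add: e_def)
    qed
    then show ?thesis using fa i by blast
  qed
  ultimately have "bij_betw (\<lambda>i. face_of rot (e i)) {..<lam} ?S"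
    by (auto simp: bij_betw_def)
  then show ?thesis
    by (simp add: bij_betw_same_card[symmetric])
qed

lemma is_3cycle_decomp_colour_decomp: "is_3cycle_decomp q r lam (colour_decomp c)"
  unfolding is_3cycle_decomp_def
proof (intro conjI ballI impI)
  fix S assume "S \<in># colour_decomp c"
  then obtain d where d: "d \<in> darts" and S: "S = face_vertices (face_of rot d)"
    using finite_colour_class by (auto simp: colour_decomp_def elim: colour_classE)
  show "card S = 3"
    using card_face_vertices_face_of_rot[OF d] S by simp
  show "S \<subseteq> mp_vertices q r"
    using face_of_rot_subset[OF d] mp_dartsD(1) by (auto simp: S face_vertices_def mp_vertices_def)
  fix x y assume "x \<in> S" "y \<in> S" "x \<noteq> y"
  then obtain a where a: "a \<in> darts" "{tail a, head a} = {x, y}"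
    using face_has_edge[OF d] face_of_rot_subset[OF d] S by blast
  then show "\<not> same_part q x y"
    using mp_dartsD(3)[OF a(1)] by (auto simp: doubleton_eq_iff same_part_def)
next
  fix x y assume "x \<in> mp_vertices q r" "y \<in> mp_vertices q r" "\<not> same_part q x y"
  then show "size (filter_mset (\<lambda>S. x \<in> S \<and> y \<in> S) (colour_decomp c)) = lam"
    using card_colour_class_containing finite_colour_class
    by (simp add: colour_decomp_def filter_mset_image_mset filter_mset_mset_set mp_vertices_def)
qed

definition shift :: "nat \<Rightarrow> nat \<times> nat \<times> nat \<Rightarrow> nat \<times> nat \<times> nat" where
  "shift g d = dart_at ((tail d + g) mod v) (lbl d)"

lemma shift:
  assumes "d \<in> darts"
  shows "shift g d \<in> darts" "tail (shift g d) = (tail d + g) mod v" "lbl (shift g d) = lbl d"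
  using dart_at[OF _ lbl_in[OF assms], of "(tail d + g) mod v"] order_pos
  by (simp_all add: shift_def)

lemma head_shift:
  assumes "d \<in> darts"
  shows "head (shift g d) = (head d + g) mod v"
  using head_lbl[OF shift(1)[OF assms]] shift(2,3)[OF assms] head_lbl[OF assms]
  by (simp add: mod_add_left_eq mod_add_right_eq ac_simps)

lemma face_perm_rot_shift:
  assumes "d \<in> darts"
  shows "\<phi> (shift g d) = shift g (\<phi> d)"
proof -
  have rev_shift: "rev_dart (shift g d) = shift g (rev_dart d)"
    using rev_dart_in_mp_darts shift head_shift lbl_rev_dart assms by (intro dart_eqI) simp_all
  have rot_shift: "rot (shift g e) = shift g (rot e)" if "e \<in> darts" for e
    using shift rot that by (intro dart_eqI) simp_all
  show ?thesis
    using rev_shift rot_shift[OF rev_dart_in_mp_darts[OF assms]] by (simp add: face_perm_def)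
qed

lemma face_of_rot_shift:
  assumes "d \<in> darts"
  shows "face_of rot (shift g d) = shift g ` face_of rot d"
  using face_perm_rot_shift[OF assms] face_perm_rot_shift[OF face_triangle(1)[OF assms]]
  by (simp add: face_of_rot assms shift(1))

lemma inj_on_shift: "inj_on (shift g) darts"
proof (rule inj_onI)
  fix a b assume a: "a \<in> darts" and b: "b \<in> darts" and "shift g a = shift g b"
  then have "[tail a + g = tail b + g] (mod v)" "lbl a = lbl b"
    using shift(2,3) by (metis cong_def)+
  then show "a = b"
    using dart_eqI[OF a b] mp_dartsD(1) a b by (simp add: cong_add_rcancel_nat cong_less_modulus_unique_nat)
qed

lemma inj_on_image_shift: "inj_on ((`) (shift g)) (colour_class c)"
  using colour_class_subset inj_on_image inj_on_subset[OF inj_on_shift] by (metis Sup_least)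

lemma image_shift_colour_class: "(`) (shift g) ` colour_class c = colour_class c"
proof (rule endo_inj_surj[OF finite_colour_class _ inj_on_image_shift], clarify)
  fix f assume "f \<in> colour_class c"
  then obtain d where d: "d \<in> darts" "f = face_of rot d" "face_colour f = c"
    by (auto elim: colour_classE)
  have "face_colour (face_of rot (shift g d)) = c"
    using face_colour_face_of_rot[OF shift(1)[OF d(1)]] face_colour_face_of_rot[OF d(1)]
      shift(3)[OF d(1)] d(2,3) by simp
  then show "shift g ` f \<in> colour_class c"
    unfolding d(2) face_of_rot_shift[OF d(1), symmetric]
    by (rule face_of_rot_in_colour_class[OF shift(1)[OF d(1)]])
qed

lemma translate_colour_decomp:
  "image_mset (translate_cycle v g) (colour_decomp c) = colour_decomp c"
proof -
  have translate: "(translate_cycle v g \<circ> face_vertices) f = (face_vertices \<circ> (`) (shift g)) f"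
    if "f \<in># mset_set (colour_class c)" for f
  proof -
    have "f \<subseteq> darts"
      using that colour_class_subset finite_colour_class by simp
    then have "tail ` shift g ` f = (\<lambda>d. (tail d + g) mod v) ` f"
      unfolding image_image using shift(2) by (intro image_cong) blast+
    then show ?thesis
      by (simp add: translate_cycle_def face_vertices_def image_image)
  qed
  have "image_mset (translate_cycle v g) (colour_decomp c)
      = image_mset (translate_cycle v g \<circ> face_vertices) (mset_set (colour_class c))"
    by (simp add: colour_decomp_def multiset.map_comp)
  also have "\<dots> = image_mset face_vertices (image_mset ((`) (shift g)) (mset_set (colour_class c)))"
    using translate by (simp add: multiset.map_comp cong: image_mset_cong)
  also have "\<dots> = colour_decomp c"
    by (simp add: image_mset_mset_set[OF inj_on_image_shift] image_shift_colour_class colour_decomp_def)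
  finally show ?thesis .
qed

theorem cyclic_biembedding:
  "orientable_biembedding q r lam (colour_decomp True) (colour_decomp False) rot face_colour"
  "is_cyclic_3cycle_decomp q r lam (colour_decomp c)"
proof -
  have "\<forall>f\<in>faces darts rot. card f = 3"
    using card_face_of_rot by (auto simp: faces_def)
  moreover have "\<forall>d\<in>darts. face_colour (face_of rot d) \<noteq> face_colour (face_of rot (rev_dart d))"
    using face_colour_rev_dart by simp
  ultimately show "orientable_biembedding q r lam (colour_decomp True) (colour_decomp False) rot face_colour"
    using rotation_system_rot
    by (simp add: orientable_biembedding_def colour_decomp_def colour_class_def)
  show "is_cyclic_3cycle_decomp q r lam (colour_decomp c)"
    using is_3cycle_decomp_colour_decomp translate_colour_decomp
    by (simp add: is_cyclic_3cycle_decomp_def)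
qed

end

section \<open>Labelling the darts by residues modulo \<open>q * r * lam\<close>\<close>

definition non_multiples :: "nat \<Rightarrow> nat \<Rightarrow> nat set" where
  "non_multiples q N = {e. e < N \<and> \<not> q dvd e}"

lemma card_non_multiples:
  assumes "0 < q" "q dvd N"
  shows "card (non_multiples q N) = N - N div q"
proof -
  have multiples: "{e. e < N \<and> q dvd e} = (\<lambda>k. q * k) ` {..<N div q}"
    using assms by (auto simp: dvd_def less_mult_imp_div_less mult.commute[of q] elim!: dvdE)
  have "non_multiples q N = {..<N} - (\<lambda>k. q * k) ` {..<N div q}"
    unfolding non_multiples_def multiples[symmetric] by auto
  moreover have "card ((\<lambda>k. q * k) ` {..<N div q}) = N div q"
    using assms(1) by (simp add: card_image inj_on_def)
  moreover have "(\<lambda>k. q * k) ` {..<N div q} \<subseteq> {..<N}"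
    using multiples by blast
  ultimately show ?thesis
    by (simp add: card_Diff_subset)
qed

lemma residue_diff_eq_iff:
  fixes v x y e :: nat
  assumes "x < v"
  shows "(y + v - x) mod v = e mod v \<longleftrightarrow> [x + e = y] (mod v)"
proof -
  have "[y + v - x = e] (mod v) \<longleftrightarrow> [y + v - x + x = e + x] (mod v)"
    by (rule cong_add_rcancel_nat[symmetric])
  also have "\<dots> \<longleftrightarrow> [y = e + x] (mod v)"
    using assms by (simp add: cong_def)
  finally show ?thesis
    by (simp add: cong_def add.commute eq_commute)
qed

lemma residue_diff_add_swap:
  fixes v x y :: nat
  assumes "x < v" "y < v" "x \<noteq> y"
  shows "(y + v - x) mod v + (x + v - y) mod v = v"
proof (cases "x < y")
  case True
  then have "(y + v - x) mod v = y - x" "(x + v - y) mod v = x + v - y"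
    using assms by (simp_all add: mod_if)
  then show ?thesis using True assms(2) by simp
next
  case False
  then have "(y + v - x) mod v = y + v - x" "(x + v - y) mod v = x - y"
    using assms by (simp_all add: mod_if)
  then show ?thesis using False assms by simp
qed

lemma same_part_iff_dvd:
  assumes "q dvd v" "[x + e = y] (mod v)"
  shows "same_part q x y \<longleftrightarrow> q dvd e"
proof -
  have "[x + e = y] (mod q)"
    using assms cong_dvd_modulus_nat by blast
  have "same_part q x y \<longleftrightarrow> [y = x] (mod q)"
    by (simp add: same_part_def cong_def eq_commute)
  also have "\<dots> \<longleftrightarrow> [e + x = x] (mod q)"
    using \<open>[x + e = y] (mod q)\<close> by (metis add.commute cong_sym cong_trans)
  also have "\<dots> \<longleftrightarrow> q dvd e"
    by (simp add: cong_add_rcancel_0_nat cong_0_iff)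
  finally show ?thesis .
qed

text \<open>Reversing a dart must negate its label modulo \<open>v * lam\<close>. The residue part
  \<open>y - x mod v\<close> of the label is negated automatically, so the index part must turn \<open>i\<close> into
  \<open>lam - 1 - i\<close>: of the two darts of an edge, the \<open>forward\<close> one keeps its index.\<close>

definition forward :: "nat \<Rightarrow> nat \<Rightarrow> nat \<Rightarrow> bool" where
  "forward v x y \<longleftrightarrow> 2 * ((y + v - x) mod v) < v \<or> (2 * ((y + v - x) mod v) = v \<and> x < y)"

definition parallel_index :: "nat \<Rightarrow> nat \<Rightarrow> nat \<Rightarrow> nat \<Rightarrow> nat \<Rightarrow> nat" where
  "parallel_index v lam x y i = (if forward v x y then i else lam - 1 - i)"

definition dart_label :: "nat \<Rightarrow> nat \<Rightarrow> nat \<times> nat \<times> nat \<Rightarrow> nat" where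
  "dart_label v lam d =
     (case d of (x, y, i) \<Rightarrow> (y + v - x) mod v + v * parallel_index v lam x y i)"

definition label_dart :: "nat \<Rightarrow> nat \<Rightarrow> nat \<Rightarrow> nat \<Rightarrow> nat \<times> nat \<times> nat" where
  "label_dart v lam x e = (x, (x + e) mod v, parallel_index v lam x ((x + e) mod v) (e div v))"

lemma forward_swap:
  assumes "x < v" "y < v" "x \<noteq> y"
  shows "forward v y x \<longleftrightarrow> \<not> forward v x y"
proof -
  define D where "D = (y + v - x) mod v"
  define D' where "D' = (x + v - y) mod v"
  have "D + D' = v"
    using residue_diff_add_swap[OF assms] by (simp add: D_def D'_def)
  then show ?thesis
    using assms(3) unfolding forward_def D_def[symmetric] D'_def[symmetric] by auto
qed

lemma parallel_index_less: "i < lam \<Longrightarrow> parallel_index v lam x y i < lam"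
  by (auto simp: parallel_index_def)

lemma parallel_index_parallel_index:
  "i < lam \<Longrightarrow> parallel_index v lam x y (parallel_index v lam x y i) = i"
  by (auto simp: parallel_index_def)

lemma parallel_index_swap:
  assumes "x < v" "y < v" "x \<noteq> y" "i < lam"
  shows "parallel_index v lam x y i + parallel_index v lam y x i = lam - 1"
  using forward_swap[OF assms(1-3)] assms(4) by (auto simp: parallel_index_def)

lemma dart_label_mod: "0 < v \<Longrightarrow> dart_label v lam (x, y, i) mod v = (y + v - x) mod v"
  by (simp add: dart_label_def)

lemma dart_label_div: "0 < v \<Longrightarrow> dart_label v lam (x, y, i) div v = parallel_index v lam x y i"
  by (simp add: dart_label_def)

lemma cong_add_dart_label:
  assumes "x < v"
  shows "[x + dart_label v lam (x, y, i) = y] (mod v)"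
proof -
  have "(y + v - x) mod v = dart_label v lam (x, y, i) mod v"
    using dart_label_mod assms by simp
  then show ?thesis
    using residue_diff_eq_iff[OF assms] by simp
qed

context
  fixes q r lam :: nat
  assumes q_pos: "0 < q" and r_pos: "0 < r"
begin

lemma dart_label_in_non_multiples:
  assumes d: "d \<in> mp_darts q r lam"
  shows "dart_label (q * r) lam d \<in> non_multiples q (q * r * lam)"
proof -
  obtain x y i where xyi: "d = (x, y, i)" "x < q * r" "y < q * r" "\<not> same_part q x y" "i < lam"
    using d by (cases d) (auto simp: mp_darts_def)
  have "(y + q * r - x) mod (q * r) + q * r * parallel_index (q * r) lam x y i
      < q * r + q * r * parallel_index (q * r) lam x y i"
    using q_pos r_pos by simp
  also have "\<dots> = q * r * (parallel_index (q * r) lam x y i + 1)"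
    by simp
  also have "\<dots> \<le> q * r * lam"
    using parallel_index_less[OF xyi(5), of "q * r" x y] by (intro mult_le_mono2) simp
  finally have "dart_label (q * r) lam d < q * r * lam"
    by (simp add: dart_label_def xyi(1))
  moreover have "\<not> q dvd dart_label (q * r) lam d"
    using same_part_iff_dvd[OF _ cong_add_dart_label[OF xyi(2)]] xyi by simp
  ultimately show ?thesis
    by (simp add: non_multiples_def)
qed

lemma label_dart:
  assumes x: "x < q * r" and e: "e \<in> non_multiples q (q * r * lam)"
  shows "label_dart (q * r) lam x e \<in> mp_darts q r lam" "tail (label_dart (q * r) lam x e) = x"
    "dart_label (q * r) lam (label_dart (q * r) lam x e) = e"
proof -
  let ?y = "(x + e) mod (q * r)"
  have e_div: "e div (q * r) < lam"
    using e by (simp add: non_multiples_def less_mult_imp_div_less mult.commute)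
  have "[x + e = ?y] (mod q * r)"
    by (simp add: cong_def)
  then have "\<not> same_part q x ?y" "(?y + q * r - x) mod (q * r) = e mod (q * r)"
    using same_part_iff_dvd[of q "q * r", OF _ \<open>[x + e = ?y] (mod q * r)\<close>] residue_diff_eq_iff[OF x] e
    by (simp_all add: non_multiples_def)
  then show "label_dart (q * r) lam x e \<in> mp_darts q r lam" "tail (label_dart (q * r) lam x e) = x"
    "dart_label (q * r) lam (label_dart (q * r) lam x e) = e"
    using x e_div q_pos r_pos parallel_index_less[OF e_div] parallel_index_parallel_index[OF e_div]
    by (simp_all add: label_dart_def mp_darts_def tail_def dart_label_def)
qed

lemma label_dart_dart_label:
  assumes d: "d \<in> mp_darts q r lam"
  shows "label_dart (q * r) lam (tail d) (dart_label (q * r) lam d) = d"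
proof -
  obtain x y i where xyi: "d = (x, y, i)" "x < q * r" "y < q * r" "i < lam"
    using d by (cases d) (auto simp: mp_darts_def)
  then have "(x + dart_label (q * r) lam d) mod (q * r) = y"
    using cong_add_dart_label[OF xyi(2)] by (simp add: cong_def)
  then show ?thesis
    using xyi dart_label_div[of "q * r"] q_pos r_pos parallel_index_parallel_index
    by (simp add: label_dart_def tail_def)
qed

lemma bij_betw_dart_label:
  assumes "x < q * r"
  shows "bij_betw (dart_label (q * r) lam) {d \<in> mp_darts q r lam. tail d = x}
           (non_multiples q (q * r * lam))"
  by (rule bij_betw_byWitness[where f' = "label_dart (q * r) lam x"])
    (use label_dart_dart_label label_dart[OF assms] dart_label_in_non_multiples in auto)

lemma head_dart_label:
  assumes d: "d \<in> mp_darts q r lam"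
  shows "head d = (tail d + dart_label (q * r) lam d) mod (q * r)"
  using cong_add_dart_label[OF mp_dartsD(1)[OF d]] mp_dartsD(2)[OF d] dart_eq_triple[of d]
  by (metis cong_def mod_less)

lemma dart_label_add_rev_dart:
  assumes d: "d \<in> mp_darts q r lam"
  shows "dart_label (q * r) lam d + dart_label (q * r) lam (rev_dart d) = q * r * lam"
proof -
  obtain x y i where xyi: "d = (x, y, i)" "x < q * r" "y < q * r" "x \<noteq> y" "i < lam"
    using d by (cases d) (auto simp: mp_darts_def same_part_def)
  then have "lam > 0" by simp
  have "dart_label (q * r) lam d + dart_label (q * r) lam (rev_dart d)
      = ((y + q * r - x) mod (q * r) + (x + q * r - y) mod (q * r))
        + q * r * (parallel_index (q * r) lam x y i + parallel_index (q * r) lam y x i)"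
    by (simp add: xyi(1) dart_label_def rev_dart_def algebra_simps)
  also have "\<dots> = q * r + q * r * (lam - 1)"
    using residue_diff_add_swap parallel_index_swap xyi(2-5) by simp
  also have "\<dots> = q * r * lam"
    using \<open>lam > 0\<close> by (simp add: algebra_simps mult_eq_if)
  finally show ?thesis .
qed

end

section \<open>A \<open>3 \<times> n\<close> Heffter array\<close>

definition heffter_entry :: "nat \<Rightarrow> int \<Rightarrow> nat \<Rightarrow> int" where
  "heffter_entry M i s =
     (if s = 0 then 1 + int M * i else if s = 1 then 2 - 2 * int M * i else int M * i - 3)"

lemma heffter_column_sum: "heffter_entry M i 0 + heffter_entry M i 1 + heffter_entry M i 2 = 0"
  by (simp add: heffter_entry_def)

lemma heffter_diagonal_sum:
  "heffter_entry M j 0 + heffter_entry M (j - 1) 1 + heffter_entry M (j - 2) 2 = 0"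
  by (simp add: heffter_entry_def algebra_simps)

lemma heffter_entry_cong:
  assumes "[i = i'] (mod int n)"
  shows "[heffter_entry M i s = heffter_entry M i' s] (mod int (M * n))"
proof -
  obtain k where "i' = i + int n * k"
    using assms by (auto simp: cong_iff_lin)
  then have "heffter_entry M i' s - heffter_entry M i s = int (M * n) * (if s = 1 then - 2 * k else k)"
    by (simp add: heffter_entry_def algebra_simps)
  then show ?thesis
    by (metis cong_iff_dvd_diff cong_sym dvd_triv_left)
qed

lemma heffter_entry_cong_column_0: "[heffter_entry M i s = heffter_entry M 0 s] (mod int M)"
  by (simp add: heffter_entry_def cong_iff_dvd_diff algebra_simps)

text \<open>A cell \<open>(i, s)\<close> lies in column \<open>i < n\<close> and row \<open>s < 3\<close>; the broken diagonal \<open>j\<close>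
  consists of the cells with \<open>i + s \<equiv> j (mod n)\<close>, and \<open>diag_cell n j t\<close> is its cell in row
  \<open>t\<close> (the summand \<open>2 * n\<close> avoids truncated subtraction).\<close>

definition diag :: "nat \<Rightarrow> nat \<times> nat \<Rightarrow> nat" where
  "diag n c = (fst c + snd c) mod n"

definition diag_cell :: "nat \<Rightarrow> nat \<Rightarrow> nat \<Rightarrow> nat \<times> nat" where
  "diag_cell n j t = ((j + 2 * n - t) mod n, t)"

definition next_row :: "nat \<Rightarrow> nat \<Rightarrow> nat" where
  "next_row j t = (if j = 0 then (t + 1) mod 3 else (t + 2) mod 3)"

definition diag_next :: "nat \<Rightarrow> nat \<times> nat \<Rightarrow> nat \<times> nat" where
  "diag_next n c = diag_cell n (diag n c) (next_row (diag n c) (snd c))"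

lemma next_row_less: "next_row j t < 3"
  by (simp add: next_row_def)

lemma next_row_cube: "t < 3 \<Longrightarrow> next_row j (next_row j (next_row j t)) = t"
  by (auto simp: next_row_def mod_Suc)

lemma sum_next_rows:
  fixes g :: "nat \<Rightarrow> 'a::comm_monoid_add"
  assumes "t < 3"
  shows "g t + g (next_row j t) + g (next_row j (next_row j t)) = g 0 + g 1 + g 2"
proof -
  have "t = 0 \<or> t = 1 \<or> t = 2" using assms by auto
  then show ?thesis by (auto simp: next_row_def ac_simps numeral_2_eq_2)
qed

lemma diag_cell_less: "0 < n \<Longrightarrow> fst (diag_cell n j t) < n"
  by (simp add: diag_cell_def)

lemma snd_diag_cell [simp]: "snd (diag_cell n j t) = t"
  by (simp add: diag_cell_def)

lemma diag_diag_cell: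
  assumes "0 < n" "j < n" "t < 3"
  shows "diag n (diag_cell n j t) = j"
proof -
  have "((j + 2 * n - t) mod n + t) mod n = (j + 2 * n - t + t) mod n"
    by (simp add: mod_add_left_eq)
  also have "j + 2 * n - t + t = j + n * 2"
    using assms by simp
  finally show ?thesis
    using assms by (simp add: diag_def diag_cell_def)
qed

lemma diag_cell_diag:
  assumes "i < n" "s < 3"
  shows "diag_cell n (diag n (i, s)) s = (i, s)"
proof -
  have "[(i + s) mod n + 2 * n - s + s = i + s] (mod n)"
    using assms by (simp add: cong_def mod_add_left_eq)
  then have "[(i + s) mod n + 2 * n - s = i] (mod n)"
    using cong_add_rcancel_nat by blast
  then have "((i + s) mod n + 2 * n - s) mod n = i"
    using assms(1) by (simp add: cong_def)
  then show ?thesis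
    by (simp add: diag_def diag_cell_def)
qed

lemma diag_next_diag_cell:
  assumes "0 < n" "j < n" "t < 3"
  shows "diag_next n (diag_cell n j t) = diag_cell n j (next_row j t)"
  using diag_diag_cell[OF assms] by (simp add: diag_next_def diag_cell_def)

lemma diag_next_cube:
  assumes "i < n" "s < 3"
  shows "diag_next n (diag_next n (diag_next n (i, s))) = (i, s)"
proof -
  let ?j = "diag n (i, s)"
  have "0 < n" "?j < n" using assms by (simp_all add: diag_def)
  then have "diag_next n (diag_next n (diag_next n (diag_cell n ?j s))) = diag_cell n ?j s"
    using assms(2) by (simp add: diag_next_diag_cell next_row_less next_row_cube)
  then show ?thesis
    by (simp add: diag_cell_diag[OF assms])
qed

definition signed_cells :: "nat \<Rightarrow> (nat \<times> nat \<times> bool) set" where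
  "signed_cells n = {..<n} \<times> {..<3} \<times> UNIV"

definition neg_cell :: "nat \<times> nat \<times> bool \<Rightarrow> nat \<times> nat \<times> bool" where
  "neg_cell l = (fst l, fst (snd l), \<not> snd (snd l))"

text \<open>Followed by \<open>neg_cell\<close>, this rotation runs through the columns of the array on
  positive cells and through its diagonals on negative ones, so that all faces are zero-sum
  triangles. Diagonal 0 is traversed with increasing row index and all others with decreasing
  row index; this orientation makes the rotation a single cycle.\<close>

definition heffter_rot :: "nat \<Rightarrow> nat \<times> nat \<times> bool \<Rightarrow> nat \<times> nat \<times> bool" where
  "heffter_rot n l = (case l of (i, s, b) \<Rightarrow>
     if b then (fst (diag_next n (i, s)), snd (diag_next n (i, s)), False)
     else (i, (s + 1) mod 3, True))"

definition signed_entry :: "nat \<Rightarrow> nat \<times> nat \<times> bool \<Rightarrow> int" where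
  "signed_entry M l = (case l of (i, s, b) \<Rightarrow> (if b then 1 else - 1) * heffter_entry M (int i) s)"

definition cell_value :: "nat \<Rightarrow> nat \<Rightarrow> nat \<times> nat \<times> bool \<Rightarrow> nat" where
  "cell_value M n l = nat (signed_entry M l mod int (M * n))"

lemma neg_cell_in: "l \<in> signed_cells n \<Longrightarrow> neg_cell l \<in> signed_cells n"
  by (auto simp: signed_cells_def neg_cell_def)

lemma neg_cell_neg_cell [simp]: "neg_cell (neg_cell l) = l"
  by (simp add: neg_cell_def)

lemma heffter_rot_in: "l \<in> signed_cells n \<Longrightarrow> heffter_rot n l \<in> signed_cells n"
  by (auto simp: signed_cells_def heffter_rot_def diag_next_def diag_cell_def next_row_def)

lemma heffter_rot_neg_cell_positive:
  "heffter_rot n (neg_cell (i, s, True)) = (i, next_row 0 s, True)"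
  by (simp add: heffter_rot_def neg_cell_def next_row_def)

lemma heffter_rot_neg_cell_negative:
  "heffter_rot n (neg_cell (fst c, snd c, False)) = (fst (diag_next n c), snd (diag_next n c), False)"
  by (simp add: heffter_rot_def neg_cell_def)

lemma heffter_face_cube:
  assumes "l \<in> signed_cells n"
  shows "heffter_rot n (neg_cell (heffter_rot n (neg_cell (heffter_rot n (neg_cell l))))) = l"
proof -
  obtain i s b where l: "l = (i, s, b)" "i < n" "s < 3"
    using assms by (auto simp: signed_cells_def)
  show ?thesis
  proof (cases b)
    case True
    then show ?thesis
      using l next_row_less next_row_cube
      by (simp only: heffter_rot_neg_cell_positive)
  next
    case False
    then show ?thesis
      using l heffter_rot_neg_cell_negative[of n "(_, _)"] diag_next_cube[OF l(2,3)]
      by (simp add: heffter_rot_def neg_cell_def)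
  qed
qed

lemma inj_on_heffter_rot: "inj_on (heffter_rot n) (signed_cells n)"
proof (rule inj_onI)
  fix l l' assume "l \<in> signed_cells n" "l' \<in> signed_cells n" "heffter_rot n l = heffter_rot n l'"
  then show "l = l'"
    using heffter_face_cube[OF neg_cell_in] neg_cell_neg_cell by metis
qed

lemma heffter_entry_diag_cell:
  assumes "0 < n" "t < 3"
  shows "[heffter_entry M (int (fst (diag_cell n j t))) t = heffter_entry M (int j - int t) t]
           (mod int (M * n))"
proof (rule heffter_entry_cong)
  have "int (j + 2 * n - t) = int j - int t + int n * 2"
    using assms by (simp add: of_nat_diff)
  then show "[int (fst (diag_cell n j t)) = int j - int t] (mod int n)"
    by (simp add: diag_cell_def cong_def of_nat_mod)
qed

lemma signed_entry_face_sum: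
  assumes "l \<in> signed_cells n"
  shows "[signed_entry M l + signed_entry M (heffter_rot n (neg_cell l))
          + signed_entry M (heffter_rot n (neg_cell (heffter_rot n (neg_cell l)))) = 0] (mod int (M * n))"
proof -
  obtain i s b where l: "l = (i, s, b)" "i < n" "s < 3"
    using assms by (auto simp: signed_cells_def)
  show ?thesis
  proof (cases b)
    case True
    have "heffter_entry M (int i) s + heffter_entry M (int i) (next_row 0 s)
        + heffter_entry M (int i) (next_row 0 (next_row 0 s)) = 0"
      using sum_next_rows[OF l(3), of "heffter_entry M (int i)"] heffter_column_sum by simp
    then show ?thesis
      using True by (simp add: l(1) heffter_rot_neg_cell_positive signed_entry_def)
  next
    case False
    let ?j = "diag n (i, s)"
    let ?g = "\<lambda>t. heffter_entry M (int ?j - int t) t"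
    let ?c = "\<lambda>t. (fst (diag_cell n ?j t), snd (diag_cell n ?j t), False)"
    let ?e = "\<lambda>t. signed_entry M (?c t)"
    have n: "0 < n" "?j < n" using l by (simp_all add: diag_def)
    have e: "[?e t = - ?g t] (mod int (M * n))" if "t < 3" for t
      using heffter_entry_diag_cell[OF n(1) that]
      by (simp add: signed_entry_def cong_minus_minus_iff diag_cell_def)
    have step: "heffter_rot n (neg_cell (?c t)) = ?c (next_row ?j t)" if "t < 3" for t
      by (simp only: heffter_rot_neg_cell_negative diag_next_diag_cell[OF n that])
    have "l = ?c s"
      using diag_cell_diag[OF l(2,3)] False l(1) by simp
    then have sum_e: "signed_entry M l + signed_entry M (heffter_rot n (neg_cell l))
          + signed_entry M (heffter_rot n (neg_cell (heffter_rot n (neg_cell l))))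
        = ?e s + ?e (next_row ?j s) + ?e (next_row ?j (next_row ?j s))"
      using step l(3) next_row_less by simp
    have "[?e s + ?e (next_row ?j s) + ?e (next_row ?j (next_row ?j s))
        = - ?g s + - ?g (next_row ?j s) + - ?g (next_row ?j (next_row ?j s))] (mod int (M * n))"
      by (intro cong_add e l(3) next_row_less)
    moreover have "?g s + ?g (next_row ?j s) + ?g (next_row ?j (next_row ?j s)) = 0"
      using sum_next_rows[OF l(3), of ?g] heffter_diagonal_sum[of M "int ?j"] by simp
    then have "- ?g s + - ?g (next_row ?j s) + - ?g (next_row ?j (next_row ?j s)) = 0"
      by linarith
    ultimately show ?thesis
      unfolding sum_e by simp
  qed
qed

lemma signed_entry_neg_cell: "signed_entry M (neg_cell l) = - signed_entry M l"
  by (simp add: signed_entry_def neg_cell_def split: prod.splits)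

lemma int_cell_value: "0 < M * n \<Longrightarrow> int (cell_value M n l) = signed_entry M l mod int (M * n)"
  by (simp add: cell_value_def)

lemma cong_int_cell_value: "0 < M * n \<Longrightarrow> [int (cell_value M n l) = signed_entry M l] (mod int (M * n))"
  by (simp add: int_cell_value cong_def)

lemma cell_value_add_neg_cell:
  assumes "0 < M * n" "cell_value M n l \<noteq> 0"
  shows "cell_value M n l + cell_value M n (neg_cell l) = M * n"
proof -
  have "signed_entry M l mod int (M * n) \<noteq> 0"
    using assms int_cell_value[OF assms(1), of l] by simp
  then have "int (cell_value M n l + cell_value M n (neg_cell l)) = int (M * n)"
    by (simp only: of_nat_add int_cell_value[OF assms(1)] signed_entry_neg_cell zmod_zminus1_eq_if)
      simp
  then show ?thesis
    by (simp only: of_nat_eq_iff)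
qed

lemma dvd_cell_value_face_sum:
  assumes "0 < M * n" "l \<in> signed_cells n"
  shows "M * n dvd cell_value M n l + cell_value M n (heffter_rot n (neg_cell l))
           + cell_value M n (heffter_rot n (neg_cell (heffter_rot n (neg_cell l))))"
proof -
  have "[int (cell_value M n l + cell_value M n (heffter_rot n (neg_cell l))
           + cell_value M n (heffter_rot n (neg_cell (heffter_rot n (neg_cell l)))))
      = signed_entry M l + signed_entry M (heffter_rot n (neg_cell l))
           + signed_entry M (heffter_rot n (neg_cell (heffter_rot n (neg_cell l))))] (mod int (M * n))"
    unfolding of_nat_add by (intro cong_add cong_int_cell_value[OF assms(1)])
  then have "[int (cell_value M n l + cell_value M n (heffter_rot n (neg_cell l))
           + cell_value M n (heffter_rot n (neg_cell (heffter_rot n (neg_cell l))))) = 0]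
      (mod int (M * n))"
    using signed_entry_face_sum[OF assms(2)] by (rule cong_trans)
  then show ?thesis
    by (simp only: cong_0_iff of_nat_dvd_iff)
qed

lemma signed_entry_cong_column_0: "[signed_entry M (i, s, b) = signed_entry M (0, s, b)] (mod int M)"
  using heffter_entry_cong_column_0[of M "int i" s] by (simp add: signed_entry_def cong_scalar_left)

lemma signed_entry_cong_same_row:
  assumes "odd n" "0 < M" "i < n" "i' < n"
    and "[signed_entry M (i, s, b) = signed_entry M (i', s, b)] (mod int (M * n))"
  shows "i = i'"
proof -
  let ?d = "(if b then 1 else - 1) * (if s = 1 then - 2 else 1) :: int"
  have "signed_entry M (i, s, b) - signed_entry M (i', s, b) = int M * ((int i - int i') * ?d)"
    by (simp add: signed_entry_def heffter_entry_def algebra_simps)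
  then have "int n dvd (int i - int i') * ?d"
    using assms(2,5) by (simp add: cong_iff_dvd_diff)
  moreover have "coprime (int n) ?d"
    using assms(1) by simp
  ultimately have "[int i = int i'] (mod int n)"
    by (simp add: coprime_dvd_mult_left_iff cong_iff_dvd_diff)
  then show ?thesis
    using assms(3,4) by (simp add: cong_int_iff cong_less_modulus_unique_nat)
qed

context
  fixes M q n :: nat
  assumes heffter_params: "(M = 7 \<and> q = 7) \<or> (M = 8 \<and> q = 4)" and odd_n: "odd n"
begin

lemma signed_entry_column_0_residues:
  assumes "s < 3" "s' < 3"
  shows "[signed_entry M (0, s, b) = signed_entry M (0, s', b')] (mod int M) \<longleftrightarrow> s = s' \<and> b = b'"
    and "\<not> int q dvd signed_entry M (0, s, b)"
proof -
  have "s \<in> {0, 1, 2}" "s' \<in> {0, 1, 2}"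
    using assms by auto
  then show "[signed_entry M (0, s, b) = signed_entry M (0, s', b')] (mod int M) \<longleftrightarrow> s = s' \<and> b = b'"
    "\<not> int q dvd signed_entry M (0, s, b)"
    using heffter_params
    by (cases b; cases b'; auto simp: signed_entry_def heffter_entry_def cong_def)+
qed

lemma heffter_order_pos: "0 < M * n"
  using heffter_params odd_n by (auto intro: odd_pos)

lemma cell_value_in_non_multiples:
  assumes "l \<in> signed_cells n"
  shows "cell_value M n l \<in> non_multiples q (M * n)"
proof -
  obtain i s b where l: "l = (i, s, b)" "s < 3"
    using assms by (auto simp: signed_cells_def)
  have q_dvd: "int q dvd int M"
    using heffter_params by auto
  then have "int q dvd int (M * n)"
    by simp
  then have "[int (cell_value M n l) = signed_entry M (i, s, b)] (mod int q)"
    using cong_dvd_modulus[OF cong_int_cell_value[OF heffter_order_pos]] l(1) by blast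
  moreover have "[signed_entry M (i, s, b) = signed_entry M (0, s, b)] (mod int q)"
    using cong_dvd_modulus[OF signed_entry_cong_column_0 q_dvd] .
  ultimately have "\<not> int q dvd int (cell_value M n l)"
    using signed_entry_column_0_residues(2)[OF l(2) l(2)] cong_dvd_iff cong_trans by blast
  moreover have "int (cell_value M n l) < int (M * n)"
    unfolding int_cell_value[OF heffter_order_pos] using heffter_order_pos by simp
  then have "cell_value M n l < M * n"
    by (simp only: of_nat_less_iff)
  ultimately show ?thesis
    by (simp add: non_multiples_def)
qed

lemma inj_on_cell_value: "inj_on (cell_value M n) (signed_cells n)"
proof (rule inj_onI)
  fix l l' assume "l \<in> signed_cells n" "l' \<in> signed_cells n" "cell_value M n l = cell_value M n l'"
  then obtain i s b i' s' b' where l: "l = (i, s, b)" "i < n" "s < 3" and l': "l' = (i', s', b')" "i' < n" "s' < 3"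
    and eq: "cell_value M n (i, s, b) = cell_value M n (i', s', b')"
    by (auto simp: signed_cells_def)
  have cong_Mn: "[signed_entry M (i, s, b) = signed_entry M (i', s', b')] (mod int (M * n))"
    using cong_int_cell_value[OF heffter_order_pos] eq by (metis cong_sym cong_trans)
  then have "[signed_entry M (0, s, b) = signed_entry M (0, s', b')] (mod int M)"
    using signed_entry_cong_column_0 cong_dvd_modulus[of _ _ "int (M * n)" "int M"]
    by (metis cong_sym cong_trans dvd_triv_left of_nat_mult)
  then have "s = s'" "b = b'"
    using signed_entry_column_0_residues(1)[OF l(3) l'(3)] by simp_all
  then show "l = l'"
    using signed_entry_cong_same_row[OF odd_n _ l(2) l'(2)] cong_Mn heffter_order_pos l l' by simp
qed

lemma bij_betw_cell_value: "bij_betw (cell_value M n) (signed_cells n) (non_multiples q (M * n))"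
proof -
  have "card (signed_cells n) = 6 * n"
    by (simp add: signed_cells_def card_cartesian_product)
  moreover have "card (non_multiples q (M * n)) = 6 * n"
    using heffter_params by (auto simp: card_non_multiples)
  moreover have "cell_value M n ` signed_cells n \<subseteq> non_multiples q (M * n)"
    using cell_value_in_non_multiples by blast
  ultimately have "cell_value M n ` signed_cells n = non_multiples q (M * n)"
    using card_image[OF inj_on_cell_value]
    by (metis card_subset_eq finite_subset mem_Collect_eq non_multiples_def subsetI finite_Collect_less_nat)
  then show ?thesis
    using inj_on_cell_value by (simp add: bij_betw_def)
qed

lemma cell_value_neg_cell:
  assumes "l \<in> signed_cells n"
  shows "cell_value M n (neg_cell l) = M * n - cell_value M n l"
proof -
  have "cell_value M n l \<noteq> 0"
    using cell_value_in_non_multiples[OF assms] by (metis dvd_0_right mem_Collect_eq non_multiples_def)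
  then show ?thesis
    using cell_value_add_neg_cell[OF heffter_order_pos] by (metis add_diff_cancel_left')
qed

end

section \<open>The rotation of the array is a single cycle\<close>

lemma nat_descend_by_two:
  fixes a j :: nat
  assumes "P a" and step: "\<And>i. 2 \<le> i \<Longrightarrow> i \<le> a \<Longrightarrow> P i \<Longrightarrow> P (i - 2)"
    and "j \<le> a" "even (a - j)"
  shows "P j"
proof -
  have "P (a - 2 * m)" if "2 * m \<le> a" for m :: nat
    using that
  proof (induction m)
    case (Suc m)
    then have "P (a - 2 * m - 2)"
      by (intro step) simp_all
    then show ?case
      by (simp add: diff_diff_add)
  qed (simp add: assms(1))
  moreover obtain m where "a - j = 2 * m"
    using assms(4) by blast
  ultimately show ?thesis
    using assms(3) by (metis diff_diff_cancel diff_le_self)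
qed

definition positive_reachable :: "nat \<Rightarrow> nat \<Rightarrow> nat \<Rightarrow> bool" where
  "positive_reachable n i s \<longleftrightarrow> (\<exists>k. (heffter_rot n ^^ k) (0, 0, True) = (i, s, True))"

lemma positive_reachable_start: "positive_reachable n 0 0"
  unfolding positive_reachable_def by (rule exI[of _ 0]) simp

lemma positive_reachable_step:
  assumes "positive_reachable n i s" "[i + s = j] (mod n)" "j < n" "next_row j s = t"
    and "[i' + t = j] (mod n)" "i' < n" "(t + 1) mod 3 = s'"
  shows "positive_reachable n i' s'"
proof -
  obtain k where "(heffter_rot n ^^ k) (0, 0, True) = (i, s, True)"
    using assms(1) by (auto simp: positive_reachable_def)
  moreover have "diag_next n (i, s) = (i', t)"
    using diag_cell_diag[OF assms(6) next_row_less, of j s] assms(2-5)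
    by (simp add: diag_next_def diag_def cong_def)
  then have "heffter_rot n (heffter_rot n (i, s, True)) = (i', s', True)"
    using assms(7) by (simp add: heffter_rot_def)
  ultimately have "(heffter_rot n ^^ Suc (Suc k)) (0, 0, True) = (i', s', True)"
    by simp
  then show ?thesis
    unfolding positive_reachable_def ..
qed

text \<open>The square of \<open>heffter_rot\<close> on positive cells walks through row 2 from left to right
  (starting at column \<open>n - 1\<close>), then through row 1 from left to right, then through the odd
  and finally the even columns of row 0 from right to left.\<close>

lemma positive_reachable_all:
  assumes "odd n" "i < n" "s < 3"
  shows "positive_reachable n i s"
proof (cases "n = 1")
  case True
  have cell_2: "positive_reachable n 0 2"
    by (rule positive_reachable_step[OF positive_reachable_start, where j = 0 and t = 1])
      (simp_all add: True next_row_def)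
  then have "positive_reachable n 0 1"
    by (rule positive_reachable_step[where j = 0 and t = 0]) (simp_all add: True next_row_def)
  moreover have "i = 0" "s = 0 \<or> s = 1 \<or> s = 2"
    using assms True by auto
  ultimately show ?thesis
    using positive_reachable_start cell_2 by auto
next
  case False
  then have n3: "3 \<le> n"
    using assms(1) by presburger
  then have n_pred: "Suc (n - 1) = n" "Suc (Suc (n - 2)) = n" "Suc n mod n = 1"
    by (simp_all add: mod_Suc)
  have last_2: "positive_reachable n (n - 1) 2"
    by (rule positive_reachable_step[OF positive_reachable_start, where j = 0 and t = 1])
      (use n3 n_pred in \<open>simp_all add: next_row_def cong_def\<close>)
  have row_2: "positive_reachable n i 2" if "i \<le> n - 2" for i
    using that
  proof (induction i)
    case 0
    show ?case
      by (rule positive_reachable_step[OF last_2, where j = 1 and t = 1])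
        (use n3 n_pred in \<open>simp_all add: next_row_def cong_def\<close>)
  next
    case (Suc i)
    show ?case
      by (rule positive_reachable_step[OF Suc.IH, where j = "i + 2" and t = 1])
        (use Suc.prems n3 in \<open>simp_all add: next_row_def cong_def\<close>)
  qed
  have row_1: "positive_reachable n i 1" if "i \<le> n - 1" for i
    using that
  proof (induction i)
    case 0
    show ?case
      by (rule positive_reachable_step[OF row_2[of "n - 2"], where j = 0 and t = 0])
        (use n3 n_pred in \<open>simp_all add: next_row_def cong_def\<close>)
  next
    case (Suc i)
    show ?case
      by (rule positive_reachable_step[OF Suc.IH, where j = "i + 1" and t = 0])
        (use Suc.prems n3 in \<open>simp_all add: next_row_def cong_def\<close>)
  qed
  have row_0_step: "positive_reachable n (i - 2) 0" if "positive_reachable n i 0" "2 \<le> i" "i < n" for i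
    by (rule positive_reachable_step[OF that(1), where j = i and t = 2])
      (use that in \<open>simp_all add: next_row_def cong_def\<close>)
  have "positive_reachable n (n - 2) 0"
    by (rule positive_reachable_step[OF row_1[of "n - 1"], where j = 0 and t = 2])
      (use n3 n_pred in \<open>simp_all add: next_row_def cong_def\<close>)
  then have odd_0: "positive_reachable n i 0" if "i \<le> n - 2" "odd i" for i
    by (rule nat_descend_by_two) (use row_0_step that assms(1) n3 in auto)
  have "positive_reachable n (n - 1) 0"
    by (rule positive_reachable_step[OF odd_0[of 1], where j = 1 and t = 2])
      (use n3 n_pred in \<open>simp_all add: next_row_def cong_def\<close>)
  then have even_0: "positive_reachable n i 0" if "i \<le> n - 1" "even i" for i
    by (rule nat_descend_by_two) (use row_0_step that assms(1) n3 in auto)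
  have "s = 0 \<or> s = 1 \<or> s = 2"
    using assms(3) by auto
  then show ?thesis
  proof (elim disjE)
    assume "s = 0"
    have "i \<le> n - 2" if "odd i"
      using that assms(1,2) by presburger
    then show ?thesis
      using \<open>s = 0\<close> odd_0 even_0 assms(2) by (cases "even i") auto
  next
    assume "s = 1"
    then show ?thesis
      using row_1 assms(2) by simp
  next
    assume "s = 2"
    then show ?thesis
      using row_2 last_2 assms(2) by (cases "i = n - 1") auto
  qed
qed

lemma heffter_rot_reaches_all:
  assumes "odd n" "l \<in> signed_cells n"
  shows "\<exists>k. (heffter_rot n ^^ k) (0, 0, True) = l"
proof -
  obtain i s b where l: "l = (i, s, b)" "i < n" "s < 3"
    using assms(2) by (auto simp: signed_cells_def)
  show ?thesis
  proof (cases b)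
    case True
    then show ?thesis
      using positive_reachable_all[OF assms(1) l(2,3)] l(1) by (simp add: positive_reachable_def)
  next
    case False
    let ?c = "diag_next n (diag_next n (i, s))"
    have "fst ?c < n" "snd ?c < 3"
      using l(2) by (simp_all add: diag_next_def diag_cell_less next_row_less)
    then obtain k where "(heffter_rot n ^^ k) (0, 0, True) = (fst ?c, snd ?c, True)"
      using positive_reachable_all[OF assms(1)] by (auto simp: positive_reachable_def)
    moreover have "heffter_rot n (fst ?c, snd ?c, True) = l"
      using diag_next_cube[OF l(2,3)] False l(1) by (simp add: heffter_rot_def)
    ultimately have "(heffter_rot n ^^ Suc k) (0, 0, True) = l"
      by simp
    then show ?thesis ..
  qed
qed

lemma heffter_rot_cyclic:
  assumes "odd n" "l \<in> signed_cells n" "l' \<in> signed_cells n"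
  shows "\<exists>k. (heffter_rot n ^^ k) l = l'"
proof (rule funpow_reach_from_any[OF _ _ inj_on_heffter_rot _ heffter_rot_reaches_all[OF assms(1)] assms(2,3)])
  show "finite (signed_cells n)"
    by (simp add: signed_cells_def)
  show "heffter_rot n ` signed_cells n \<subseteq> signed_cells n"
    using heffter_rot_in by blast
  show "(0, 0, True) \<in> signed_cells n"
    using assms(1) by (auto simp: signed_cells_def intro: odd_pos)
qed

section \<open>The biembedding\<close>

lemma cyclic_biembedding_from_heffter:
  fixes M q n r lam :: nat
  assumes params: "(M = 7 \<and> q = 7) \<or> (M = 8 \<and> q = 4)" and n: "odd n" and r: "0 < r"
    and order: "q * r * lam = M * n"
  shows "\<exists>D D' \<rho> col.
           is_cyclic_3cycle_decomp q r lam D \<and>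
           is_cyclic_3cycle_decomp q r lam D' \<and>
           orientable_biembedding q r lam D D' \<rho> col"
proof -
  let ?cell = "inv_into (signed_cells n) (cell_value M n)"
  have q: "0 < q"
    using params by auto
  note cell_value_bij = bij_betw_cell_value[OF params n]
  have dart_label_bij: "bij_betw (dart_label (q * r) lam) {d \<in> mp_darts q r lam. tail d = x}
      (non_multiples q (M * n))" if "x < q * r" for x
    using bij_betw_dart_label[OF q r that, where lam = lam] order by simp
  have dart_label_in: "dart_label (q * r) lam d \<in> non_multiples q (M * n)"
    if "d \<in> mp_darts q r lam" for d
    using dart_label_in_non_multiples[OF q r that] order by simp
  have value_cell: "cell_value M n (?cell (dart_label (q * r) lam d)) = dart_label (q * r) lam d"
    if "d \<in> mp_darts q r lam" for d
    using f_inv_into_f dart_label_in[OF that] bij_betw_imp_surj_on[OF cell_value_bij] by metis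
  have cell_in: "?cell (dart_label (q * r) lam d) \<in> signed_cells n" if "d \<in> mp_darts q r lam" for d
    using inv_into_into dart_label_in[OF that] bij_betw_imp_surj_on[OF cell_value_bij] by metis
  interpret label_rotation q r lam "signed_cells n" "cell_value M n" neg_cell "heffter_rot n"
    "\<lambda>l. snd (snd l)" "\<lambda>d. ?cell (dart_label (q * r) lam d)"
  proof
    show "0 < q * r"
      using q r by simp
  next
    fix x assume "x < q * r"
    show "bij_betw (\<lambda>d. ?cell (dart_label (q * r) lam d)) {d \<in> mp_darts q r lam. tail d = x}
        (signed_cells n)"
      using bij_betw_trans[OF dart_label_bij[OF \<open>x < q * r\<close>] bij_betw_inv_into[OF cell_value_bij]]
      by (simp add: comp_def)
  next
    fix d assume "d \<in> mp_darts q r lam"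
    then show "head d = (tail d + cell_value M n (?cell (dart_label (q * r) lam d))) mod (q * r)"
      using head_dart_label[OF q r, where lam = lam] value_cell by simp
  next
    fix d assume d: "d \<in> mp_darts q r lam"
    let ?l = "?cell (dart_label (q * r) lam d)"
    have "dart_label (q * r) lam (rev_dart d) = cell_value M n (neg_cell ?l)"
      using dart_label_add_rev_dart[OF q r d] value_cell[OF d] order
        cell_value_neg_cell[OF params n cell_in[OF d]] by simp
    then show "?cell (dart_label (q * r) lam (rev_dart d)) = neg_cell ?l"
      using inv_into_f_f[OF bij_betw_imp_inj_on[OF cell_value_bij] neg_cell_in[OF cell_in[OF d]]]
      by simp
  next
    show "inj_on (heffter_rot n) (signed_cells n)"
      by (rule inj_on_heffter_rot)
  next
    fix l assume l: "l \<in> signed_cells n"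
    have "q * r dvd M * n"
      using order by (metis dvd_triv_left)
    then show "(cell_value M n l + cell_value M n (heffter_rot n (neg_cell l))
        + cell_value M n (heffter_rot n (neg_cell (heffter_rot n (neg_cell l))))) mod (q * r) = 0"
      using dvd_cell_value_face_sum[OF heffter_order_pos[OF params n] l] by (metis dvd_trans dvd_imp_mod_0)
  qed (use heffter_rot_in heffter_rot_cyclic[OF n] heffter_face_cube in
      \<open>auto simp: heffter_rot_def neg_cell_def split: prod.splits\<close>)
  show ?thesis
    using cyclic_biembedding by blast
qed

theorem proposition5:
  fixes n t lam :: nat
  assumes "odd n"
    and "t = n \<or> t = 2 * n"
    and "lam > 0" and "lam dvd t"
  shows "\<exists>D D' \<rho> col.
           is_cyclic_3cycle_decomp (6 * n div t + 1) (t div lam) lam D \<and>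
           is_cyclic_3cycle_decomp (6 * n div t + 1) (t div lam) lam D' \<and>
           orientable_biembedding (6 * n div t + 1) (t div lam) lam D D' \<rho> col"
proof -
  have "0 < n" "0 < t"
    using assms(1,2) odd_pos by auto
  then have r: "0 < t div lam" "t div lam * lam = t"
    using assms(3,4) by (auto elim!: dvdE)
  from assms(2) show ?thesis
  proof
    assume "t = n"
    then have q: "6 * n div t + 1 = 7" and order: "7 * (t div lam) * lam = 7 * n"
      using \<open>0 < n\<close> r(2) by (simp_all add: mult.assoc)
    show ?thesis
      unfolding q by (rule cyclic_biembedding_from_heffter[OF _ assms(1) r(1) order]) simp
  next
    assume "t = 2 * n"
    then have q: "6 * n div t + 1 = 4" and order: "4 * (t div lam) * lam = 8 * n"
      using \<open>0 < n\<close> r(2) by (simp_all add: mult.assoc)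
    show ?thesis
      unfolding q by (rule cyclic_biembedding_from_heffter[OF _ assms(1) r(1) order]) simp
  qed
qed

end
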